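(* Let $M=p_1^{n_1}\cdots p_K^{n_K}$ with distinct primes and $n_\nu\in\mathbb{N}$, and let $A\oplus B=\mathbb{Z}_M$. Then every fiber $Z=x*F_i$ ($x\in\mathbb{Z}_M$, $i\in\{1,\dots,K\}$) splits with parity $(A,B)$ or with parity $(B,A)$. In particular, for any $a\in\Sigma_A(Z)$ and $b\in\Sigma_B(Z)$ we have $\Sigma_A(Z)\subset\Pi(a,p_i^{n_i-1})$ and $\Sigma_B(Z)\subset\Pi(b,p_i^{n_i-1})$.
   Context: $A\oplus B=\mathbb{Z}_M$ means every element of $\mathbb{Z}_M$ is uniquely $a+b$ with $a\in A$, $b\in B$. $F_i=\{0,M/p_i,\dots,(p_i-1)M/p_i\}$, $x*F_i=\{x+f:f\in F_i\}$. $\Pi(y,p_i^\alpha)=\{y'\in\mathbb{Z}_M:p_i^\alpha\mid y-y'\}$. For $Z\subset\mathbb{Z}_M$, $\Sigma_A(Z)=\{a\in A: a+b\in Z\text{ for some }b\in B\}$, $\Sigma_B(Z)=\{b\in B: a+b\in Z\text{ for some }a\in A\}$. A fiber $Z=x*F_i$ splits with parity $(A,B)$ if $p_i^{n_i}\mid a-a'$ for all $a,a'\in\Sigma_A(Z)$ and, for all distinct $b,b'\in\Sigma_B(Z)$, $p_i^{n_i-1}\mid b-b'$ but $p_i^{n_i}\nmid b-b'$; parity $(B,A)$ is defined with $A,B$ interchanged. *)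

theory Defs
  imports "HOL-Computational_Algebra.Computational_Algebra"
begin

text \<open>Z_M is modelled by the residues {0..<M} (as naturals), with addition mod M.\<close>

definition ZM :: "nat \<Rightarrow> nat set" where
  "ZM M = {0..<M}"

definition tiling :: "nat \<Rightarrow> nat set \<Rightarrow> nat set \<Rightarrow> bool" where
  "tiling M A B \<longleftrightarrow> A \<subseteq> ZM M \<and> B \<subseteq> ZM M \<and>
     (\<forall>z \<in> ZM M. \<exists>!(a, b). a \<in> A \<and> b \<in> B \<and> (a + b) mod M = z)"

definition fiber :: "nat \<Rightarrow> nat \<Rightarrow> nat \<Rightarrow> nat set" where
  "fiber M p x = {(x + k * (M div p)) mod M | k. k < p}"

definition Pi_M :: "nat \<Rightarrow> nat \<Rightarrow> nat \<Rightarrow> nat set" where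
  "Pi_M M y q = {y' \<in> ZM M. int q dvd (int y - int y')}"

definition SigmaA :: "nat \<Rightarrow> nat set \<Rightarrow> nat set \<Rightarrow> nat set \<Rightarrow> nat set" where
  "SigmaA M A B Z = {a \<in> A. \<exists>b \<in> B. (a + b) mod M \<in> Z}"

definition SigmaB :: "nat \<Rightarrow> nat set \<Rightarrow> nat set \<Rightarrow> nat set \<Rightarrow> nat set" where
  "SigmaB M A B Z = {b \<in> B. \<exists>a \<in> A. (a + b) mod M \<in> Z}"

definition splits_with_parity :: "nat \<Rightarrow> nat \<Rightarrow> nat set \<Rightarrow> nat set \<Rightarrow> nat set \<Rightarrow> bool" where
  "splits_with_parity M p A B Z \<longleftrightarrow>
     (let n = multiplicity p M in
       (\<forall>a \<in> SigmaA M A B Z. \<forall>a' \<in> SigmaA M A B Z. int (p ^ n) dvd (int a - int a')) \<and>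
       (\<forall>b \<in> SigmaB M A B Z. \<forall>b' \<in> SigmaB M A B Z. b \<noteq> b' \<longrightarrow>
          int (p ^ (n - 1)) dvd (int b - int b') \<and> \<not> int (p ^ n) dvd (int b - int b')))"

end

theory Submission
  imports Defs "HOL-Number_Theory.Cong"
begin

(* Let n be the multiplicity of p in M and take two pairs (a, b) \<noteq> (a', b') in A \<times> B whose sums
   lie in the fiber. Then (a - a') + (b - b') is congruent modulo M to (k - k') M/p with
   0 < |k - k'| < p, so it is divisible by M/p, hence by p^(n-1), but not by p^n. If neither
   a - a' nor b - b' were divisible by p^n, then gcd(a - a', M) and gcd(b - b', M) would both
   divide M/p, hence each other, and so be equal; Sands' theorem forbids this in a tiling.
   Sands' theorem follows from Tijdeman's theorem (dilating A by a unit of Z_M preserves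
   A \<oplus> B), which is proved with mask polynomials.
   So any two pairs agree modulo p^n in one coordinate, and it is then the same coordinate for
   all pairs; the differences in the other coordinate have p-adic valuation exactly n - 1. *)

section \<open>The Frobenius congruence\<close>

lemma freshmans_dream_dvd:
  fixes x y :: "'a::comm_ring_1"
  assumes "prime q"
  shows "of_nat q dvd (x + y) ^ q - x ^ q - y ^ q"
proof -
  have q: "q > 1" using assms prime_gt_1_nat by blast
  have "(x + y) ^ q = (\<Sum>k\<le>q. of_nat (q choose k) * x ^ k * y ^ (q - k))"
    by (rule binomial_ring)
  also have "{..q} = insert q (insert 0 {1..<q})" using q by auto
  also have "(\<Sum>k\<in>insert q (insert 0 {1..<q}). of_nat (q choose k) * x ^ k * y ^ (q - k)) =
      x ^ q + y ^ q + (\<Sum>k\<in>{1..<q}. of_nat (q choose k) * x ^ k * y ^ (q - k))"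
    using q by (simp add: algebra_simps)
  finally have "(x + y) ^ q - x ^ q - y ^ q =
      (\<Sum>k\<in>{1..<q}. of_nat (q choose k) * x ^ k * y ^ (q - k))"
    by simp
  moreover have "of_nat q dvd of_nat (q choose k) * x ^ k * y ^ (q - k)" if "k \<in> {1..<q}" for k
  proof -
    have "q dvd q choose k" using that assms by (intro dvd_choose_prime) auto
    then obtain m where "q choose k = q * m" by (rule dvdE)
    then show ?thesis by simp
  qed
  ultimately show ?thesis by (metis (no_types, lifting) dvd_sum)
qed

lemma freshmans_dream_sum_dvd:
  fixes f :: "'b \<Rightarrow> 'a::comm_ring_1"
  assumes "prime q"
  shows "of_nat q dvd (\<Sum>s\<in>S. f s) ^ q - (\<Sum>s\<in>S. f s ^ q)"
proof (induction S rule: infinite_finite_induct)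
  case (insert s S)
  have "(\<Sum>s\<in>insert s S. f s) ^ q - (\<Sum>s\<in>insert s S. f s ^ q) =
    ((f s + sum f S) ^ q - f s ^ q - sum f S ^ q) + (sum f S ^ q - (\<Sum>s\<in>S. f s ^ q))"
    using insert.hyps by (simp add: algebra_simps)
  then show ?case using freshmans_dream_dvd[OF assms] insert.IH by (metis dvd_add)
qed (use assms prime_gt_0_nat in \<open>auto simp: power_0_left\<close>)

section \<open>Polynomials modulo X^M - 1\<close>

lemma cyclic_dvd_monom_sub_monom_mod:
  "(monom 1 M - 1 :: 'a::comm_ring_1 poly) dvd monom c n - monom c (n mod M)"
proof -
  have "monom c n - monom c (n mod M) = monom c (n mod M) * (monom 1 M ^ (n div M) - 1)"
    by (simp add: monom_power mult_monom algebra_simps flip: mult.commute[of M])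
  then show ?thesis by (simp add: power_diff_1_eq)
qed

lemma cyclic_dvd_sum_monom_sub_mod:
  "(monom 1 M - 1 :: 'a::comm_ring_1 poly) dvd
    (\<Sum>s\<in>S. monom c (f s)) - (\<Sum>s\<in>S. monom c (f s mod M))"
  unfolding sum_subtractf[symmetric] by (intro dvd_sum cyclic_dvd_monom_sub_monom_mod)

lemma cyclic_dvd_imp_zero:
  fixes P :: "'a::idom poly"
  assumes "(monom 1 M - 1) dvd P" and "\<forall>i\<ge>M. coeff P i = 0"
  shows "P = 0"
proof (rule ccontr)
  assume "P \<noteq> 0"
  then have "coeff P (degree P) \<noteq> 0" by simp
  then have "degree P < M" using assms(2) not_le by blast
  moreover have "M > 0" using \<open>P \<noteq> 0\<close> assms(1) by (cases M) auto
  then have "degree (monom 1 M - 1 :: 'a poly) = M"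
    using degree_add_eq_left[of "-1" "monom 1 M :: 'a poly"] by (simp add: degree_monom_eq)
  ultimately show False using dvd_imp_degree_le[OF assms(1) \<open>P \<noteq> 0\<close>] by simp
qed

lemma cyclic_reduction_exists:
  fixes P :: "'a::comm_ring_1 poly"
  assumes "M > 0"
  obtains W where "(monom 1 M - 1) dvd P - W" and "\<forall>i\<ge>M. coeff W i = 0"
proof
  let ?W = "\<Sum>i\<le>degree P. monom (coeff P i) (i mod M)"
  have "P - ?W = (\<Sum>i\<le>degree P. monom (coeff P i) i - monom (coeff P i) (i mod M))"
    by (simp add: sum_subtractf poly_as_sum_of_monoms)
  then show "(monom 1 M - 1) dvd P - ?W"
    by (simp add: dvd_sum cyclic_dvd_monom_sub_monom_mod)
  show "\<forall>i\<ge>M. coeff ?W i = 0"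
  proof (intro allI impI)
    fix i assume "i \<ge> M"
    then have "j mod M \<noteq> i" for j using assms mod_less_divisor[OF assms, of j] by linarith
    then show "coeff ?W i = 0" by (simp add: coeff_sum)
  qed
qed

lemma cyclic_dvd_smult_imp_eq:
  fixes R C H :: "'a::idom poly"
  assumes M: "M > 0" and dvd: "(monom 1 M - 1) dvd R + smult c H - C"
    and R: "\<forall>i\<ge>M. coeff R i = 0" and C: "\<forall>i\<ge>M. coeff C i = 0"
  obtains W where "R + smult c W = C"
proof -
  obtain W where W: "(monom 1 M - 1) dvd H - W" and W_coeff: "\<forall>i\<ge>M. coeff W i = 0"
    using cyclic_reduction_exists[OF M] by blast
  have "(monom 1 M - 1) dvd (R + smult c H - C) - smult c (H - W)"
    by (rule dvd_diff[OF dvd dvd_smult[OF W]])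
  moreover have "(R + smult c H - C) - smult c (H - W) = R + smult c W - C"
    by (simp add: algebra_simps smult_diff_right)
  moreover have "\<forall>i\<ge>M. coeff (R + smult c W - C) i = 0"
    using R C W_coeff by simp
  ultimately have "R + smult c W - C = 0"
    using cyclic_dvd_imp_zero by metis
  then show ?thesis using that by simp
qed

section \<open>Tilings\<close>

lemma ZM_eq_lessThan: "ZM M = {..<M}"
  by (simp add: ZM_def atLeast0LessThan)

lemma tiling_iff_bij:
  "tiling M A B \<longleftrightarrow> A \<subseteq> {..<M} \<and> B \<subseteq> {..<M} \<and>
     bij_betw (\<lambda>(a, b). (a + b) mod M) (A \<times> B) {..<M}"
proof -
  define f :: "nat \<times> nat \<Rightarrow> nat" where "f = (\<lambda>(a, b). (a + b) mod M)"
  have ex1_iff: "(\<exists>!(a, b). a \<in> A \<and> b \<in> B \<and> (a + b) mod M = z) \<longleftrightarrow>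
      (\<exists>!s. s \<in> A \<times> B \<and> f s = z)" for z
    unfolding f_def by (rule arg_cong[where f = Ex1]) (auto simp: fun_eq_iff)
  have "(\<forall>z\<in>{..<M}. \<exists>!s. s \<in> A \<times> B \<and> f s = z) \<longleftrightarrow> bij_betw f (A \<times> B) {..<M}"
    if A: "A \<subseteq> {..<M}"
  proof
    assume ex1: "\<forall>z\<in>{..<M}. \<exists>!s. s \<in> A \<times> B \<and> f s = z"
    have into: "f s \<in> {..<M}" if s: "s \<in> A \<times> B" for s
    proof -
      obtain a b where "s = (a, b)" "a \<in> A" using s by (cases s) auto
      then have "M > 0" using A by auto
      then show ?thesis using \<open>s = (a, b)\<close> by (simp add: f_def)
    qed
    show "bij_betw f (A \<times> B) {..<M}"
    proof (rule bij_betw_imageI)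
      show "inj_on f (A \<times> B)"
      proof (rule inj_onI)
        fix s t assume s: "s \<in> A \<times> B" and t: "t \<in> A \<times> B" and "f s = f t"
        have "\<exists>!u. u \<in> A \<times> B \<and> f u = f s" by (rule ex1[rule_format, OF into[OF s]])
        then show "s = t" using s t \<open>f s = f t\<close> by (auto simp only: Ex1_def)
      qed
      have "z \<in> f ` (A \<times> B)" if "z \<in> {..<M}" for z
        using ex1_implies_ex[OF ex1[rule_format, OF that]] by blast
      then show "f ` (A \<times> B) = {..<M}" using into by blast
    qed
  next
    assume bij: "bij_betw f (A \<times> B) {..<M}"
    show "\<forall>z\<in>{..<M}. \<exists>!s. s \<in> A \<times> B \<and> f s = z"
    proof
      fix z assume "z \<in> {..<M}"
      then obtain s where "s \<in> A \<times> B" "f s = z"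
        using bij_betw_imp_surj_on[OF bij] by (metis imageE)
      then show "\<exists>!s. s \<in> A \<times> B \<and> f s = z"
        using bij_betw_imp_inj_on[OF bij] by (auto dest: inj_onD)
    qed
  qed
  then show ?thesis unfolding tiling_def ZM_eq_lessThan ex1_iff f_def[symmetric] by blast
qed

lemma tiling_commute:
  assumes "tiling M A B"
  shows "tiling M B A"
proof -
  have "bij_betw prod.swap (B \<times> A) (A \<times> B)"
    by (simp add: bij_betw_def product_swap)
  moreover have "(\<lambda>(a, b). (a + b) mod M) \<circ> prod.swap = (\<lambda>(b, a). (b + a) mod M)"
    by (auto simp: add.commute)
  ultimately show ?thesis
    using assms bij_betw_trans unfolding tiling_iff_bij by metis
qed

lemma tiling_card: "tiling M A B \<Longrightarrow> card A * card B = M"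
  unfolding tiling_iff_bij by (auto dest: bij_betw_same_card simp: card_cartesian_product)

lemma tiling_unique:
  assumes "tiling M A B" "a \<in> A" "a' \<in> A" "b \<in> B" "b' \<in> B"
    and "(a + b) mod M = (a' + b') mod M"
  shows "a = a'" and "b = b'"
  using assms bij_betw_imp_inj_on[of "\<lambda>(a, b). (a + b) mod M" "A \<times> B" "{..<M}"]
  unfolding tiling_iff_bij by (auto dest: inj_onD[where x = "(a, b)" and y = "(a', b')"])

lemma tiling_dilate_if_bij:
  assumes "M > 0" and B: "B \<subseteq> {..<M}"
    and bij: "bij_betw (\<lambda>(a, b). (u * a + b) mod M) (A \<times> B) {..<M}"
  shows "tiling M ((\<lambda>a. u * a mod M) ` A) B"
proof -
  define g :: "nat \<times> nat \<Rightarrow> nat \<times> nat" where "g = (\<lambda>(a, b). (u * a mod M, b))"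
  define f :: "nat \<times> nat \<Rightarrow> nat" where "f = (\<lambda>(a, b). (a + b) mod M)"
  have fg: "f \<circ> g = (\<lambda>(a, b). (u * a + b) mod M)"
    by (auto simp: f_def g_def mod_add_left_eq)
  have img: "g ` (A \<times> B) = (\<lambda>a. u * a mod M) ` A \<times> B"
    by (auto simp: g_def image_iff)
  have "bij_betw f (g ` (A \<times> B)) {..<M}"
    unfolding bij_betw_def
  proof
    show "inj_on f (g ` (A \<times> B))"
      using bij_betw_imp_inj_on[OF bij] by (intro inj_on_imageI) (simp add: fg)
    show "f ` g ` (A \<times> B) = {..<M}"
      using bij_betw_imp_surj_on[OF bij] by (simp add: image_comp fg)
  qed
  then show ?thesis
    unfolding tiling_iff_bij img f_def using B \<open>M > 0\<close> by auto
qed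

section \<open>Tijdeman's theorem\<close>

definition mask_poly :: "nat set \<Rightarrow> int poly" where
  "mask_poly S = (\<Sum>s\<in>S. monom 1 s)"

lemma poly_mask_poly_1: "poly (mask_poly S) 1 = int (card S)"
  by (simp add: mask_poly_def poly_sum poly_monom)

lemma coeff_mask_poly_lessThan: "coeff (mask_poly {..<M}) i = (if i < M then 1 else 0)"
  by (simp add: mask_poly_def coeff_sum)

lemma cyclic_dvd_mult_mask_poly_lessThan:
  "(monom 1 M - 1) dvd P * mask_poly {..<M} - smult (poly P 1) (mask_poly {..<M})"
proof -
  have "[:-1, 1:] dvd P - [:poly P 1:]"
    by (simp flip: poly_eq_0_iff_dvd)
  then obtain g where g: "P - [:poly P 1:] = [:-1, 1:] * g" by (rule dvdE)
  have "[:-1, 1:] = monom 1 1 - (1 :: int poly)"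
    by (simp add: monom_Suc one_pCons)
  moreover have "mask_poly {..<M} = (\<Sum>i<M. monom 1 1 ^ i)"
    by (simp add: mask_poly_def monom_power)
  ultimately have "[:-1, 1:] * mask_poly {..<M} = (monom 1 1 - 1) * (\<Sum>i<M. monom 1 1 ^ i)"
    by (simp only:)
  also have "\<dots> = monom 1 1 ^ M - 1"
    by (rule power_diff_1_eq[symmetric])
  finally have "[:-1, 1:] * mask_poly {..<M} = monom 1 M - 1"
    by (simp add: monom_power)
  moreover have "P * mask_poly {..<M} - smult (poly P 1) (mask_poly {..<M}) =
      (P - [:poly P 1:]) * mask_poly {..<M}"
    by (simp add: algebra_simps)
  ultimately show ?thesis
    unfolding g by (metis dvd_triv_left mult.assoc mult.commute)
qed

lemma tiling_imp_cyclic_dvd: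
  assumes "tiling M A B"
  shows "(monom 1 M - 1) dvd mask_poly A * mask_poly B - mask_poly {..<M}"
proof -
  have bij: "bij_betw (\<lambda>(a, b). (a + b) mod M) (A \<times> B) {..<M}"
    using assms unfolding tiling_iff_bij by blast
  have "mask_poly {..<M} = (\<Sum>s\<in>A \<times> B. monom 1 ((\<lambda>(a, b). a + b) s mod M))"
    using sum.reindex_bij_betw[OF bij, of "monom 1", symmetric]
    by (simp add: mask_poly_def case_prod_beta)
  moreover have "mask_poly A * mask_poly B = (\<Sum>s\<in>A \<times> B. monom 1 ((\<lambda>(a, b). a + b) s))"
    by (simp add: mask_poly_def sum_product sum.cartesian_product mult_monom case_prod_beta)
  ultimately show ?thesis
    by (simp only: cyclic_dvd_sum_monom_sub_mod)
qed

(* Multiply A(X) B(X) = U(X) mod X^M - 1, where U = mask_poly {..<M}, by A(X)^(q-1), using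
   A(X)^q = A(X^q) mod q and P(X) U(X) = P(1) U(X) mod X^M - 1. *)
lemma tiling_dilate_prime_cyclic_dvd:
  assumes T: "tiling M A B" and q: "prime q"
  obtains H where "(monom 1 M - 1) dvd
    (\<Sum>(a, b)\<in>A \<times> B. monom 1 ((q * a + b) mod M)) + smult (int q) H
      - smult (int (card A ^ (q - 1))) (mask_poly {..<M})"
proof -
  let ?X = "monom 1 M - 1 :: int poly" and ?U = "mask_poly {..<M}"
  let ?Aq = "\<Sum>a\<in>A. monom 1 (q * a) :: int poly"
  let ?R = "\<Sum>(a, b)\<in>A \<times> B. monom 1 ((q * a + b) mod M) :: int poly"
  have "of_nat q dvd mask_poly A ^ q - ?Aq"
    using freshmans_dream_sum_dvd[OF q, of "monom 1" A]
    by (simp add: mask_poly_def monom_power mult.commute)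
  then obtain h where "mask_poly A ^ q - ?Aq = of_nat q * h" by (rule dvdE)
  then have h: "mask_poly A ^ q = ?Aq + smult (int q) h"
    by (simp add: of_nat_poly eq_diff_eq)
  have "mask_poly A ^ (q - 1) * (mask_poly A * mask_poly B) = mask_poly A ^ q * mask_poly B"
    using q prime_gt_0_nat by (simp add: power_eq_if mult.assoc)
  also have "\<dots> = ?Aq * mask_poly B + smult (int q) (h * mask_poly B)"
    by (simp add: h algebra_simps)
  finally have Frobenius: "mask_poly A ^ (q - 1) * (mask_poly A * mask_poly B) =
      ?Aq * mask_poly B + smult (int q) (h * mask_poly B)" .
  have tile: "?X dvd mask_poly A * mask_poly B - ?U"
    by (rule tiling_imp_cyclic_dvd[OF T])
  have avg: "?X dvd mask_poly A ^ (q - 1) * ?U - smult (int (card A ^ (q - 1))) ?U"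
    using cyclic_dvd_mult_mask_poly_lessThan[of M "mask_poly A ^ (q - 1)"]
    by (simp add: poly_mask_poly_1)
  have "?Aq * mask_poly B = (\<Sum>(a, b)\<in>A \<times> B. monom 1 (q * a + b))"
    by (simp add: mask_poly_def sum_product sum.cartesian_product mult_monom)
  then have red: "?X dvd ?Aq * mask_poly B - ?R"
    using cyclic_dvd_sum_monom_sub_mod[where S = "A \<times> B" and c = 1 and f = "\<lambda>(a, b). q * a + b"]
    by (simp add: case_prod_beta)
  have "?R + smult (int q) (h * mask_poly B) - smult (int (card A ^ (q - 1))) ?U =
      mask_poly A ^ (q - 1) * (mask_poly A * mask_poly B - ?U)
      + (mask_poly A ^ (q - 1) * ?U - smult (int (card A ^ (q - 1))) ?U)
      - (?Aq * mask_poly B - ?R)"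
    unfolding right_diff_distrib Frobenius by (simp add: algebra_simps)
  also have "?X dvd \<dots>"
    by (rule dvd_diff[OF dvd_add[OF dvd_mult[OF tile] avg] red])
  finally show ?thesis using that by blast
qed

(* Comparing coefficients in the resulting identity R + q W = |A|^(q-1) U, every z < M is hit
   by (a, b) \<mapsto> (q a + b) mod M a number of times congruent to |A|^(q-1) mod q, which is
   nonzero because |A| divides M. *)
lemma tiling_dilate_prime_surj:
  assumes T: "tiling M A B" and q: "prime q" "\<not> q dvd M"
  shows "(\<lambda>(a, b). (q * a + b) mod M) ` (A \<times> B) = {..<M}"
proof -
  define f where "f = (\<lambda>(a, b). (q * a + b) mod M)"
  define c where "c = int (card A ^ (q - 1))"
  let ?R = "\<Sum>s\<in>A \<times> B. monom 1 (f s) :: int poly"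
  have M: "M > 0" using q(2) by (rule contrapos_np) simp
  have coeff_R: "coeff ?R i = (\<Sum>s\<in>A \<times> B. if f s = i then 1 else 0)" for i
    by (simp add: coeff_sum)
  have f_less: "f s < M" for s
    using M by (simp add: f_def case_prod_beta)
  have R: "\<forall>i\<ge>M. coeff ?R i = 0"
  proof (intro allI impI)
    fix i assume "i \<ge> M"
    then have "f s \<noteq> i" for s using f_less[of s] by simp
    then show "coeff ?R i = 0" by (simp add: coeff_R)
  qed
  have U: "\<forall>i\<ge>M. coeff (smult c (mask_poly {..<M})) i = 0"
    by (simp add: coeff_mask_poly_lessThan)
  obtain H where "(monom 1 M - 1) dvd ?R + smult (int q) H - smult c (mask_poly {..<M})"
    using tiling_dilate_prime_cyclic_dvd[OF T q(1)] unfolding f_def c_def case_prod_beta by blast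
  from cyclic_dvd_smult_imp_eq[OF M this R U]
  obtain W where W: "?R + smult (int q) W = smult c (mask_poly {..<M})" .
  have "z \<in> f ` (A \<times> B)" if "z < M" for z
  proof (rule ccontr)
    assume "z \<notin> f ` (A \<times> B)"
    then have "coeff ?R z = 0" by (auto simp: coeff_R intro!: sum.neutral)
    then have "c = int q * coeff W z"
      using arg_cong[OF W, of "\<lambda>P. coeff P z"] \<open>z < M\<close>
      by (simp add: coeff_mask_poly_lessThan)
    then have "q dvd card A ^ (q - 1)" unfolding c_def by (metis dvdI int_dvd_int_iff)
    then have "q dvd card A" using q(1) prime_dvd_power by blast
    moreover have "card A dvd M" using tiling_card[OF T] by (metis dvd_triv_left)
    ultimately show False using q(2) dvd_trans by blast
  qed
  then show ?thesis using f_less unfolding f_def[symmetric] by auto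
qed

lemma tiling_dilate_prime:
  assumes T: "tiling M A B" and q: "prime q" "\<not> q dvd M"
  shows "tiling M ((\<lambda>a. q * a mod M) ` A) B"
proof (rule tiling_dilate_if_bij)
  show "M > 0" using q(2) by (rule contrapos_np) simp
  show "B \<subseteq> {..<M}" using T unfolding tiling_iff_bij by blast
  have "finite (A \<times> B)" using T unfolding tiling_iff_bij by (auto intro: finite_subset)
  moreover have "card (A \<times> B) = M" using tiling_card[OF T] by (simp add: card_cartesian_product)
  ultimately show "bij_betw (\<lambda>(a, b). (q * a + b) mod M) (A \<times> B) {..<M}"
    using tiling_dilate_prime_surj[OF assms] by (simp add: bij_betw_def eq_card_imp_inj_on)
qed

lemma tiling_dilate_coprime:
  assumes T: "tiling M A B" and M: "M > 0" and u: "coprime u M"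
  shows "tiling M ((\<lambda>a. u * a mod M) ` A) B"
  using u
proof (induction u rule: less_induct)
  case (less u)
  show ?case
  proof (cases "u \<le> 1")
    case True
    with less.prems M have "u = 1 \<or> M = 1" by (auto simp: le_Suc_eq)
    moreover have "A \<subseteq> {..<M}" using T unfolding tiling_iff_bij by blast
    ultimately have "u * a mod M = a" if "a \<in> A" for a using that by auto
    then have "(\<lambda>a. u * a mod M) ` A = A" by simp
    then show ?thesis using T by simp
  next
    case False
    then obtain q where q: "prime q" "q dvd u" using prime_factor_nat[of u] by auto
    from q(2) obtain u' where u': "u = q * u'" by (rule dvdE)
    with False have "u' > 0" by (cases u') auto
    then have "u' < u" using u' prime_gt_1_nat[OF q(1)] by (simp add: n_less_m_mult_n)
    moreover have "coprime u' M" "coprime q M" using less.prems u' by simp_all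
    ultimately have T': "tiling M ((\<lambda>a. u' * a mod M) ` A) B" using less.IH by blast
    have "\<not> q dvd M"
      using \<open>coprime q M\<close> q(1) by (meson not_prime_unit coprime_common_divisor dvd_refl)
    with T' q(1) have "tiling M ((\<lambda>a. q * a mod M) ` (\<lambda>a. u' * a mod M) ` A) B"
      by (rule tiling_dilate_prime)
    moreover have "(\<lambda>a. q * a mod M) ` (\<lambda>a. u' * a mod M) ` A = (\<lambda>a. u * a mod M) ` A"
      unfolding image_image u' by (simp add: mod_mult_right_eq mult.assoc)
    ultimately show ?thesis by simp
  qed
qed

section \<open>Sands' theorem\<close>

lemma coprime_if_no_prime_divisor:
  fixes u M :: nat
  assumes "M > 0" and "\<And>p. prime p \<Longrightarrow> p dvd M \<Longrightarrow> \<not> p dvd u"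
  shows "coprime u M"
proof (rule coprimeI)
  fix c assume "c dvd u" "c dvd M"
  show "is_unit c"
  proof (rule ccontr)
    assume "\<not> is_unit c"
    moreover have "c \<noteq> 0" using \<open>c dvd M\<close> \<open>M > 0\<close> by auto
    ultimately obtain p where "p dvd c" "prime p" using prime_divisor_exists by blast
    then show False using assms(2) \<open>c dvd u\<close> \<open>c dvd M\<close> dvd_trans by blast
  qed
qed

lemma coprime_lift_mod:
  fixes u0 N M :: nat
  assumes u0: "coprime u0 N" and M: "M > 0"
  obtains u where "[u = u0] (mod N)" and "coprime u M"
proof
  define r where "r = \<Prod>{p \<in> prime_factors M. \<not> p dvd u0}"
  show "[u0 + N * r = u0] (mod N)"
    by (simp add: cong_add_lcancel_0_nat cong_0_iff)
  show "coprime (u0 + N * r) M"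
  proof (rule coprime_if_no_prime_divisor[OF M])
    fix p assume p: "prime p" "p dvd M"
    show "\<not> p dvd u0 + N * r"
    proof (cases "p dvd u0")
      case True
      then have "\<not> p dvd N" using u0 p(1) by (meson coprime_common_divisor not_prime_unit)
      moreover have "\<not> p dvd r"
        unfolding r_def using True p(1)
        by (auto simp: prime_dvd_prod_iff in_prime_factors_iff dest: primes_dvd_imp_eq)
      ultimately show ?thesis using True p(1) by (simp add: prime_dvd_mult_iff dvd_add_right_iff)
    next
      case False
      then have "p dvd r"
        unfolding r_def using p M by (intro dvd_prodI) (auto simp: in_prime_factors_iff)
      then show ?thesis using False by (simp add: dvd_add_left_iff)
    qed
  qed
qed

lemma exists_coprime_multiplier_coprime:
  fixes e e' N :: int and M :: nat
  assumes "coprime e N" "coprime e' N" "N > 0" "M > 0"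
  obtains u :: nat where "coprime u M" and "[int u * e = e'] (mod N)"
proof -
  obtain s where s: "[e * s = 1] (mod N)" using cong_solve_coprime_int[OF assms(1)] by blast
  have "coprime s N" using cong_imp_coprime[OF cong_sym[OF s]] by simp
  then have "coprime ((e' * s) mod N) N" using assms(2,3) by simp
  then have "coprime (nat ((e' * s) mod N)) (nat N)"
    using assms(3) by (simp flip: coprime_int_iff)
  then obtain u where u: "[u = nat ((e' * s) mod N)] (mod nat N)" and "coprime u M"
    using coprime_lift_mod[OF _ assms(4)] by blast
  have "[int u = e' * s] (mod N)"
    using u assms(3) by (simp flip: cong_int_iff)
  then have "[int u * e = e' * (e * s)] (mod N)"
    using cong_scalar_right by (metis mult.assoc mult.commute)
  also have "[e' * (e * s) = e'] (mod N)"
    using cong_scalar_left[OF s, of e'] by simp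
  finally show ?thesis using that \<open>coprime u M\<close> by blast
qed

lemma exists_coprime_multiplier_gcd:
  fixes x y :: int and M :: nat
  assumes M: "M > 0" and g: "gcd x (int M) = gcd y (int M)"
  obtains u :: nat where "coprime u M" and "[int u * x = y] (mod int M)"
proof -
  define d where "d = gcd x (int M)"
  have d: "d > 0" using M by (simp add: d_def)
  have x: "x = d * (x div d)" and dM: "int M = d * (int M div d)"
    by (simp_all add: d_def)
  have y: "y = d * (y div d)"
    by (simp add: d_def g)
  have "0 < d * (int M div d)" using M by (simp flip: dM)
  then have "int M div d > 0" using d by (simp add: zero_less_mult_iff)
  moreover have "coprime (x div d) (int M div d)" "coprime (y div d) (int M div d)"
    unfolding d_def using div_gcd_coprime[of x "int M"] div_gcd_coprime[of y "int M"] M g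
    by simp_all
  ultimately obtain u where "coprime u M" and u: "[int u * (x div d) = y div d] (mod int M div d)"
    using exists_coprime_multiplier_coprime M by metis
  from cong_cmult_leftI[OF u, of d] have "[int u * x = y] (mod int M)"
    by (subst x, subst y, subst dM) (simp add: mult_ac)
  with \<open>coprime u M\<close> show ?thesis using that by blast
qed

lemma tiling_gcd_diff_eq_imp_eq:
  assumes T: "tiling M A B" and a: "a \<in> A" "a' \<in> A" and b: "b \<in> B" "b' \<in> B"
    and g: "gcd (int a - int a') (int M) = gcd (int b - int b') (int M)"
  shows "a = a'"
proof -
  have A: "A \<subseteq> {..<M}" using T unfolding tiling_iff_bij by blast
  then have M: "M > 0" using a by auto
  have "gcd (int a - int a') (int M) = gcd (int b' - int b) (int M)"
    using g gcd_neg1_int[of "int b - int b'"] by simp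
  then obtain u where u: "coprime u M" and "[int u * (int a - int a') = int b' - int b] (mod int M)"
    using exists_coprime_multiplier_gcd[OF M] by blast
  then have "[int (u * a + b) = int (u * a' + b')] (mod int M)"
    by (simp add: cong_iff_dvd_diff algebra_simps)
  then have "[u * a + b = u * a' + b'] (mod M)"
    by (simp only: cong_int_iff)
  then have "(u * a mod M + b) mod M = (u * a' mod M + b') mod M"
    by (simp add: cong_def mod_add_left_eq)
  then have "b = b'"
    using tiling_unique(2)[OF tiling_dilate_coprime[OF T M u]] a b by blast
  then have "gcd (int a - int a') (int M) = int M"
    using g by simp
  then have "[int a = int a'] (mod int M)"
    unfolding cong_iff_dvd_diff by (metis gcd_dvd1)
  then have "[a = a'] (mod M)"
    by (simp only: cong_int_iff)
  moreover have "a < M" "a' < M" using a A by auto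
  ultimately show "a = a'"
    by (rule cong_less_modulus_unique_nat)
qed

section \<open>Fibers\<close>

lemma dvd_div_prime_if_not_power_dvd:
  fixes P g M :: int
  assumes P: "prime P" and PM: "P ^ n dvd M" and g: "g dvd M" "\<not> P ^ n dvd g"
  shows "g dvd M div P"
proof -
  obtain h where h: "M = g * h" using g(1) by (rule dvdE)
  have "P dvd h"
  proof (rule ccontr)
    assume "\<not> P dvd h"
    then have "coprime (P ^ n) h" using P by (simp add: prime_imp_coprime)
    then show False using PM g(2) unfolding h by (simp add: coprime_dvd_mult_left_iff)
  qed
  then obtain h' where "h = P * h'" by (rule dvdE)
  then have "M div P = g * h'" using P unfolding h by (simp add: mult.left_commute)
  then show ?thesis by simp
qed

lemma gcd_eq_if_not_prime_power_dvd:
  fixes P d e M :: int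
  assumes P: "prime P" and PM: "P ^ n dvd M"
    and d: "\<not> P ^ n dvd d" and e: "\<not> P ^ n dvd e" and de: "M div P dvd d + e"
  shows "gcd d M = gcd e M"
proof -
  have gcd_dvd: "gcd d' M dvd gcd e' M"
    if d': "\<not> P ^ n dvd d'" and "M div P dvd d' + e'" for d' e'
  proof -
    have "\<not> P ^ n dvd gcd d' M" using d' dvd_trans by blast
    then have "gcd d' M dvd M div P" using P PM by (simp add: dvd_div_prime_if_not_power_dvd)
    then have "gcd d' M dvd d' + e'" using that(2) dvd_trans by blast
    then have "gcd d' M dvd e'" by (simp add: dvd_add_right_iff)
    then show ?thesis by simp
  qed
  show ?thesis
    using gcd_dvd[OF d de] gcd_dvd[OF e] de by (simp add: add.commute zdvd_antisym_nonneg)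
qed

lemma multiplicity_pred_dvd_div:
  fixes p M :: nat
  assumes p: "prime p" "p dvd M" and M: "M > 0"
  shows "p ^ (multiplicity p M - 1) dvd M div p"
proof -
  have "multiplicity p M > 0" using p M by (simp add: prime_multiplicity_gt_zero_iff)
  then have "p ^ (multiplicity p M - 1) * p = p ^ multiplicity p M"
    by (simp flip: power_Suc2)
  then have "p ^ (multiplicity p M - 1) * p dvd M div p * p"
    using multiplicity_dvd[of p M] p(2) by simp
  then show ?thesis using p(1) by (simp add: prime_gt_0_nat)
qed

lemma fiber_diff_cong:
  assumes "y \<in> fiber M p x" "y' \<in> fiber M p x"
  obtains k k' where "k < p" "k' < p" and "y \<noteq> y' \<Longrightarrow> k \<noteq> k'"
    and "[int y - int y' = (int k - int k') * int (M div p)] (mod int M)"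
proof -
  obtain k k' where k: "k < p" "k' < p"
    and yk: "y = (x + k * (M div p)) mod M" and yk': "y' = (x + k' * (M div p)) mod M"
    using assms unfolding fiber_def by blast
  have "[int y - int y' = int (x + k * (M div p)) - int (x + k' * (M div p))] (mod int M)"
    unfolding yk yk' zmod_int by (intro cong_diff) simp_all
  then have "[int y - int y' = (int k - int k') * int (M div p)] (mod int M)"
    by (simp add: algebra_simps)
  moreover have "y \<noteq> y' \<Longrightarrow> k \<noteq> k'" using yk yk' by auto
  ultimately show ?thesis using k that by blast
qed

lemma fiber_diff:
  fixes p M :: nat
  assumes p: "prime p" "p dvd M" and M: "M > 0"
    and y: "y \<in> fiber M p x" "y' \<in> fiber M p x"
  shows "int (M div p) dvd int y - int y'"
    and "y \<noteq> y' \<Longrightarrow> \<not> int p ^ multiplicity p M dvd int y - int y'"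
proof -
  define Md where "Md = M div p"
  have MMd: "M = Md * p" using p(2) by (simp add: Md_def)
  obtain k k' where k: "k < p" "k' < p" and kk': "y \<noteq> y' \<Longrightarrow> k \<noteq> k'"
    and cong: "[int y - int y' = (int k - int k') * int Md] (mod int M)"
    using fiber_diff_cong[OF y] unfolding Md_def by blast
  have "int Md dvd int M" by (simp add: MMd)
  then show "int (M div p) dvd int y - int y'"
    unfolding Md_def[symmetric] using cong_dvd_iff[OF cong_dvd_modulus[OF cong]] by simp
  assume "y \<noteq> y'"
  show "\<not> int p ^ multiplicity p M dvd int y - int y'"
  proof
    let ?n = "multiplicity p M"
    assume "int p ^ ?n dvd int y - int y'"
    moreover have "int p ^ ?n dvd int M" using multiplicity_dvd[of p M] by (simp flip: of_nat_power)
    ultimately have "int p ^ ?n dvd (int k - int k') * int Md"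
      using cong_dvd_iff[OF cong_dvd_modulus[OF cong]] by blast
    moreover have "\<not> int p dvd int k - int k'"
    proof
      assume "int p dvd int k - int k'"
      then have "[k = k'] (mod p)" by (simp flip: cong_int_iff add: cong_iff_dvd_diff)
      then show False using k kk' \<open>y \<noteq> y'\<close> cong_less_modulus_unique_nat by blast
    qed
    then have "coprime (int p ^ ?n) (int k - int k')"
      using p(1) by (simp add: prime_imp_coprime)
    ultimately have "int p ^ ?n dvd int Md" by (simp add: coprime_dvd_mult_right_iff)
    then have "p ^ Suc ?n dvd M"
      unfolding MMd by (simp flip: of_nat_power)
    then have "Suc ?n \<le> ?n" using M p(1) by (intro multiplicity_geI) auto
    then show False by simp
  qed
qed

lemma tiling_fiber_pair:
  fixes M p :: nat
  assumes T: "tiling M A B" and p: "prime p" "p dvd M"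
    and ab: "a \<in> A" "b \<in> B" "(a + b) mod M \<in> fiber M p x"
    and ab': "a' \<in> A" "b' \<in> B" "(a' + b') mod M \<in> fiber M p x"
    and ne: "(a, b) \<noteq> (a', b')"
  shows "int p ^ (multiplicity p M - 1) dvd (int a - int a') + (int b - int b')"
    and "\<not> int p ^ multiplicity p M dvd (int a - int a') + (int b - int b')"
    and "int p ^ multiplicity p M dvd int a - int a' \<or> int p ^ multiplicity p M dvd int b - int b'"
proof -
  let ?n = "multiplicity p M" and ?D = "(int a - int a') + (int b - int b')"
  have M: "M > 0" using T ab(1) unfolding tiling_iff_bij by auto
  have "(a + b) mod M \<noteq> (a' + b') mod M"
    using tiling_unique[OF T ab(1) ab'(1) ab(2) ab'(2)] ne by blast
  note fiber_dvd = fiber_diff(1)[OF p M ab(3) ab'(3)]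
    and fiber_not_dvd = fiber_diff(2)[OF p M ab(3) ab'(3) this]
  have "[int ((a + b) mod M) - int ((a' + b') mod M) = int (a + b) - int (a' + b')] (mod int M)"
    unfolding zmod_int by (intro cong_diff) simp_all
  then have cong: "[int ((a + b) mod M) - int ((a' + b') mod M) = ?D] (mod int M)"
    by (simp add: algebra_simps)
  have "M div p dvd M" using p(2) by (metis dvd_div_mult_self dvd_triv_left)
  then have "int (M div p) dvd int M" by simp
  then have Md_dvd: "int (M div p) dvd ?D"
    using fiber_dvd cong_dvd_iff[OF cong_dvd_modulus[OF cong]] by blast
  have PnM: "int p ^ ?n dvd int M"
    using multiplicity_dvd[of p M] by (simp flip: of_nat_power)
  then show "\<not> int p ^ ?n dvd ?D"
    using fiber_not_dvd cong_dvd_iff[OF cong_dvd_modulus[OF cong]] by blast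
  have "int p ^ (?n - 1) dvd int (M div p)"
    using multiplicity_pred_dvd_div[OF p M] by (simp flip: of_nat_power)
  then show "int p ^ (?n - 1) dvd ?D" using Md_dvd dvd_trans by blast
  show "int p ^ ?n dvd int a - int a' \<or> int p ^ ?n dvd int b - int b'" (is "?A \<or> ?B")
  proof (rule ccontr)
    assume neither: "\<not> (?A \<or> ?B)"
    moreover have "int M div int p = int (M div p)" by (simp add: zdiv_int)
    ultimately have "gcd (int a - int a') (int M) = gcd (int b - int b') (int M)"
      using gcd_eq_if_not_prime_power_dvd[of "int p" ?n "int M"] p(1) PnM Md_dvd by simp
    then have "a = a'" using tiling_gcd_diff_eq_imp_eq[OF T ab(1) ab'(1) ab(2) ab'(2)] by blast
    then show False using neither by simp
  qed
qed

lemma constant_on_either_map: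
  assumes "\<And>s s'. s \<in> S \<Longrightarrow> s' \<in> S \<Longrightarrow> f s = f s' \<or> g s = g s'"
  shows "(\<forall>s\<in>S. \<forall>s'\<in>S. f s = f s') \<or> (\<forall>s\<in>S. \<forall>s'\<in>S. g s = g s')"
proof (rule disjCI)
  assume "\<not> (\<forall>s\<in>S. \<forall>s'\<in>S. g s = g s')"
  then obtain s1 s2 where s12: "s1 \<in> S" "s2 \<in> S" "g s1 \<noteq> g s2" by blast
  have "f s = f s1" if "s \<in> S" for s
    using assms[OF that s12(1)] assms[OF that s12(2)] assms[OF s12(1) s12(2)] s12(3) by metis
  then show "\<forall>s\<in>S. \<forall>s'\<in>S. f s = f s'" by metis
qed

lemma SigmaA_swap: "SigmaA M B A Z = SigmaB M A B Z"
  and SigmaB_swap: "SigmaB M B A Z = SigmaA M A B Z"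
  unfolding SigmaA_def SigmaB_def by (auto simp: add.commute)

lemma splits_with_parity_if_dvd_diff:
  fixes M p :: nat
  assumes T: "tiling M A B" and p: "prime p" "p dvd M"
    and dvd: "\<And>a a'. a \<in> SigmaA M A B (fiber M p x) \<Longrightarrow> a' \<in> SigmaA M A B (fiber M p x) \<Longrightarrow>
      int p ^ multiplicity p M dvd int a - int a'"
  shows "splits_with_parity M p A B (fiber M p x)"
  unfolding splits_with_parity_def Let_def of_nat_power
proof (intro conjI ballI impI)
  let ?n = "multiplicity p M" and ?Z = "fiber M p x"
  show "int p ^ ?n dvd int a - int a'" if "a \<in> SigmaA M A B ?Z" "a' \<in> SigmaA M A B ?Z" for a a'
    using dvd that .
  fix b b' assume b: "b \<in> SigmaB M A B ?Z" and b': "b' \<in> SigmaB M A B ?Z" and "b \<noteq> b'"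
  obtain a a' where ab: "a \<in> A" "b \<in> B" "(a + b) mod M \<in> ?Z"
    and ab': "a' \<in> A" "b' \<in> B" "(a' + b') mod M \<in> ?Z"
    using b b' unfolding SigmaB_def by blast
  then have "int p ^ ?n dvd int a - int a'"
    using dvd unfolding SigmaA_def by blast
  moreover have "int p ^ (?n - 1) dvd int p ^ ?n" by (simp add: le_imp_power_dvd)
  ultimately have "int p ^ (?n - 1) dvd int a - int a'" by (rule dvd_trans[rotated])
  moreover note pair = tiling_fiber_pair(1,2)[OF T p ab ab']
  ultimately show "int p ^ (?n - 1) dvd int b - int b'"
    using \<open>b \<noteq> b'\<close> by (simp add: dvd_add_right_iff)
  show "\<not> int p ^ ?n dvd int b - int b'"
    using pair(2) \<open>b \<noteq> b'\<close> \<open>int p ^ ?n dvd int a - int a'\<close> by (auto simp: dvd_add_right_iff)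
qed

lemma fiber_splits:
  fixes M p :: nat
  assumes T: "tiling M A B" and p: "prime p" "p dvd M"
  shows "splits_with_parity M p A B (fiber M p x) \<or> splits_with_parity M p B A (fiber M p x)"
proof -
  let ?Z = "fiber M p x" and ?P = "int p ^ multiplicity p M"
  define S where "S = {(a, b). a \<in> A \<and> b \<in> B \<and> (a + b) mod M \<in> ?Z}"
  have "int (fst s) mod ?P = int (fst s') mod ?P \<or> int (snd s) mod ?P = int (snd s') mod ?P"
    if "s \<in> S" "s' \<in> S" for s s'
  proof (cases "s = s'")
    case False
    obtain a b a' b' where s: "s = (a, b)" and s': "s' = (a', b')" by fastforce
    then have "a \<in> A" "b \<in> B" "(a + b) mod M \<in> ?Z" "a' \<in> A" "b' \<in> B" "(a' + b') mod M \<in> ?Z"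
      using that unfolding S_def by auto
    from tiling_fiber_pair(3)[OF T p this] False show ?thesis
      unfolding s s' by (simp add: mod_eq_dvd_iff)
  qed simp
  then have "(\<forall>s\<in>S. \<forall>s'\<in>S. int (fst s) mod ?P = int (fst s') mod ?P) \<or>
      (\<forall>s\<in>S. \<forall>s'\<in>S. int (snd s) mod ?P = int (snd s') mod ?P)"
    by (rule constant_on_either_map)
  then show ?thesis
  proof
    assume fst_eq: "\<forall>s\<in>S. \<forall>s'\<in>S. int (fst s) mod ?P = int (fst s') mod ?P"
    have "?P dvd int a - int a'" if a: "a \<in> SigmaA M A B ?Z" "a' \<in> SigmaA M A B ?Z" for a a'
    proof -
      obtain b b' where "(a, b) \<in> S" "(a', b') \<in> S"
        using a unfolding SigmaA_def S_def by blast
      then have "int (fst (a, b)) mod ?P = int (fst (a', b')) mod ?P" using fst_eq by blast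
      then show ?thesis by (simp add: mod_eq_dvd_iff)
    qed
    then show ?thesis using splits_with_parity_if_dvd_diff[OF T p] by blast
  next
    assume snd_eq: "\<forall>s\<in>S. \<forall>s'\<in>S. int (snd s) mod ?P = int (snd s') mod ?P"
    have "?P dvd int b - int b'" if b: "b \<in> SigmaA M B A ?Z" "b' \<in> SigmaA M B A ?Z" for b b'
    proof -
      obtain a a' where "(a, b) \<in> S" "(a', b') \<in> S"
        using b unfolding SigmaA_swap SigmaB_def S_def by blast
      then have "int (snd (a, b)) mod ?P = int (snd (a', b')) mod ?P" using snd_eq by blast
      then show ?thesis by (simp add: mod_eq_dvd_iff)
    qed
    then show ?thesis using splits_with_parity_if_dvd_diff[OF tiling_commute[OF T] p] by blast
  qed
qed

lemma splits_with_parity_imp_Sigma_subset_Pi: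
  assumes split: "splits_with_parity M p A B Z" and A: "A \<subseteq> ZM M" and B: "B \<subseteq> ZM M"
  shows "(\<forall>a\<in>SigmaA M A B Z. SigmaA M A B Z \<subseteq> Pi_M M a (p ^ (multiplicity p M - 1))) \<and>
    (\<forall>b\<in>SigmaB M A B Z. SigmaB M A B Z \<subseteq> Pi_M M b (p ^ (multiplicity p M - 1)))"
proof (intro conjI ballI subsetI)
  let ?n = "multiplicity p M"
  fix a a' assume a: "a \<in> SigmaA M A B Z" and a': "a' \<in> SigmaA M A B Z"
  then have "int (p ^ ?n) dvd int a - int a'"
    using split unfolding splits_with_parity_def Let_def by blast
  moreover have "int (p ^ (?n - 1)) dvd int (p ^ ?n)" by (simp add: le_imp_power_dvd)
  moreover have "a' \<in> ZM M" using a' A unfolding SigmaA_def by blast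
  ultimately show "a' \<in> Pi_M M a (p ^ (?n - 1))"
    unfolding Pi_M_def by (blast intro: dvd_trans)
next
  let ?n = "multiplicity p M"
  fix b b' assume b: "b \<in> SigmaB M A B Z" and b': "b' \<in> SigmaB M A B Z"
  then have "int (p ^ (?n - 1)) dvd int b - int b'"
    using split unfolding splits_with_parity_def Let_def by (cases "b = b'") auto
  moreover have "b' \<in> ZM M" using b' B unfolding SigmaB_def by blast
  ultimately show "b' \<in> Pi_M M b (p ^ (?n - 1))"
    unfolding Pi_M_def by blast
qed

lemma splits_with_either_parity_imp_Sigma_subset_Pi:
  assumes split: "splits_with_parity M p A B Z \<or> splits_with_parity M p B A Z"
    and A: "A \<subseteq> ZM M" and B: "B \<subseteq> ZM M"
  shows "(\<forall>a\<in>SigmaA M A B Z. SigmaA M A B Z \<subseteq> Pi_M M a (p ^ (multiplicity p M - 1))) \<and>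
    (\<forall>b\<in>SigmaB M A B Z. SigmaB M A B Z \<subseteq> Pi_M M b (p ^ (multiplicity p M - 1)))"
  using split
proof
  assume "splits_with_parity M p B A Z"
  from splits_with_parity_imp_Sigma_subset_Pi[OF this B A] show ?thesis
    unfolding SigmaA_swap[where A = A] SigmaB_swap[where A = A] by blast
qed (rule splits_with_parity_imp_Sigma_subset_Pi[OF _ A B])

theorem lemma4p3:
  fixes M p x :: nat and A B :: "nat set"
  assumes "M > 0" and "prime p" and "p dvd M"
    and "tiling M A B"
    and "x \<in> ZM M"
  shows "(splits_with_parity M p A B (fiber M p x) \<or> splits_with_parity M p B A (fiber M p x)) \<and>
         (\<forall>a \<in> SigmaA M A B (fiber M p x).
            SigmaA M A B (fiber M p x) \<subseteq> Pi_M M a (p ^ (multiplicity p M - 1))) \<and>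
         (\<forall>b \<in> SigmaB M A B (fiber M p x).
            SigmaB M A B (fiber M p x) \<subseteq> Pi_M M b (p ^ (multiplicity p M - 1)))"
proof -
  have A: "A \<subseteq> ZM M" and B: "B \<subseteq> ZM M"
    using \<open>tiling M A B\<close> unfolding tiling_def by blast+
  have split: "splits_with_parity M p A B (fiber M p x) \<or> splits_with_parity M p B A (fiber M p x)"
    by (rule fiber_splits[OF \<open>tiling M A B\<close> \<open>prime p\<close> \<open>p dvd M\<close>])
  show ?thesis
    using split splits_with_either_parity_imp_Sigma_subset_Pi[OF split A B] by (rule conjI)
qed

end
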